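(* Let $S$ be a numerical semigroup with minimal generators $e<a_1<\dots<a_t$, and let $s\in S$ and $r\in\mathbb N$. (1) If $\mathbf x=(x_0,\dots,x_t)$ is an $S$-factorization of $s$ of length $r$, then $(0,x_1,\dots,x_t)$ is a $B^{\mathcal D}$-factorization of $s-re$ of length at most $r$. (2) If $\mathbf y=(y_0,\dots,y_t)$ is a $B^{\mathcal D}$-factorization of $s-re$ of length at most $r$, then $(2y_0+r-|\mathbf y|,y_1,\dots,y_t)$ is an $S$-factorization of $s$ of length $r+y_0$; in particular ${\rm ord}(s;S)\ge r$.
   Context: A numerical semigroup is a submonoid of $(\mathbb N,+)$ with finite complement. An $S$-factorization of $n\in S$ is $(c_0,\dots,c_t)\in\mathbb N^{t+1}$ with $c_0e+\sum_{i\ge1}c_ia_i=n$; its length is $\sum c_i$. ${\rm ord}(n;S)$ is the maximal such length. Let $d_i=a_i-e$, let $B=\langle e,d_1,\dots,d_t\rangle$ be the blowup, and $\mathcal D=(e,d_1,\dots,d_t)$. A $B^{\mathcal D}$-factorization of an integer $b$ is $(x_0,\dots,x_t)\in\mathbb N^{t+1}$ with $x_0e+\sum_{i\ge1}x_id_i=b$; its length $|\mathbf x|$ is $\sum x_i$. *)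

theory Defs
  imports Main
begin

definition numerical_semigroup :: "nat set \<Rightarrow> bool" where
  "numerical_semigroup S \<longleftrightarrow> 0 \<in> S \<and> (\<forall>x\<in>S. \<forall>y\<in>S. x + y \<in> S) \<and> finite (UNIV - S)"

inductive_set monoid_gen :: "nat set \<Rightarrow> nat set" for A :: "nat set" where
  zero: "0 \<in> monoid_gen A"
| add: "g \<in> A \<Longrightarrow> x \<in> monoid_gen A \<Longrightarrow> g + x \<in> monoid_gen A"

definition minimal_generators :: "nat set \<Rightarrow> nat set \<Rightarrow> bool" where
  "minimal_generators S A \<longleftrightarrow> monoid_gen A = S \<and> (\<forall>g\<in>A. g \<notin> monoid_gen (A - {g}))"

text \<open>Generators e = a 0 < a 1 < ... < a t. Vectors (c_0,...,c_t) are functions on nat,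
  only indices 0..t matter.\<close>

definition fact_len :: "nat \<Rightarrow> (nat \<Rightarrow> nat) \<Rightarrow> nat" where
  "fact_len t c = (\<Sum>i\<le>t. c i)"

definition S_fact :: "(nat \<Rightarrow> nat) \<Rightarrow> nat \<Rightarrow> (nat \<Rightarrow> nat) \<Rightarrow> nat \<Rightarrow> bool" where
  "S_fact a t c n \<longleftrightarrow> (\<Sum>i\<le>t. c i * a i) = n"

definition blowup_gen :: "(nat \<Rightarrow> nat) \<Rightarrow> nat \<Rightarrow> int" where
  "blowup_gen a i = (if i = 0 then int (a 0) else int (a i) - int (a 0))"

definition BD_fact :: "(nat \<Rightarrow> nat) \<Rightarrow> nat \<Rightarrow> (nat \<Rightarrow> nat) \<Rightarrow> int \<Rightarrow> bool" where
  "BD_fact a t x b \<longleftrightarrow> (\<Sum>i\<le>t. int (x i) * blowup_gen a i) = b"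

definition ord_S :: "(nat \<Rightarrow> nat) \<Rightarrow> nat \<Rightarrow> nat \<Rightarrow> nat" where
  "ord_S a t n = Max {fact_len t c | c. S_fact a t c n}"

end

theory Submission
  imports Defs
begin

text \<open>Since d_i = a_i - e, the blowup value of any vector x equals its semigroup value minus
  e (|x| - x_0). Hence setting x_0 to 0 in an S-factorization of s of length r leaves the value
  s - r e, and conversely raising y_0 to 2 y_0 + r - |y| turns a blowup factorization of
  s - r e into an S-factorization of s.\<close>

lemma sum_atMost_update_zero:
  fixes f :: "'a \<Rightarrow> nat \<Rightarrow> 'b::ab_group_add"
  shows "(\<Sum>i\<le>t. f ((x(0 := v)) i) i) = (\<Sum>i\<le>t. f (x i) i) - f (x 0) 0 + f v 0"
proof -
  have "(\<Sum>i\<le>t. g i) = g 0 + (\<Sum>i\<in>{..t} - {0}. g i)" for g :: "nat \<Rightarrow> 'b"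
    by (rule sum.remove) auto
  moreover have "(\<Sum>i\<in>{..t} - {0}. f ((x(0 := v)) i) i) = (\<Sum>i\<in>{..t} - {0}. f (x i) i)"
    by (rule sum.cong) auto
  ultimately show ?thesis by (simp add: algebra_simps)
qed

lemma int_fact_len_update_zero:
  fixes x :: "nat \<Rightarrow> nat"
  shows "int (fact_len t (x(0 := v))) = int (fact_len t x) - int (x 0) + int v"
  unfolding fact_len_def of_nat_sum
  using sum_atMost_update_zero[of "\<lambda>n i. int n" x v t] by simp

lemma int_factorization_sum_update_zero:
  fixes x a :: "nat \<Rightarrow> nat"
  shows "int (\<Sum>i\<le>t. (x(0 := v)) i * a i) = int (\<Sum>i\<le>t. x i * a i) + (int v - int (x 0)) * int (a 0)"
  unfolding of_nat_sum
  using sum_atMost_update_zero[of "\<lambda>n i. int (n * a i)" x v t] by (simp add: algebra_simps)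

lemma blowup_sum_eq:
  "(\<Sum>i\<le>t. int (x i) * blowup_gen a i)
     = int (\<Sum>i\<le>t. x i * a i) - (int (fact_len t x) - int (x 0)) * int (a 0)"
proof -
  let ?T = "{..t} - {0}"
  have split: "(\<Sum>i\<le>t. g i) = g 0 + (\<Sum>i\<in>?T. g i)" for g :: "nat \<Rightarrow> int"
    by (rule sum.remove) auto
  have "(\<Sum>i\<in>?T. int (x i) * blowup_gen a i)
      = (\<Sum>i\<in>?T. int (x i * a i)) - (\<Sum>i\<in>?T. int (x i)) * int (a 0)"
    by (simp add: blowup_gen_def algebra_simps sum_subtractf sum_distrib_left)
  then show ?thesis
    unfolding fact_len_def of_nat_sum
    using split[of "\<lambda>i. int (x i) * blowup_gen a i"] split[of "\<lambda>i. int (x i * a i)"]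
      split[of "\<lambda>i. int (x i)"]
    by (simp add: blowup_gen_def algebra_simps)
qed

lemma zero_notin_minimal_generators:
  assumes "minimal_generators S A"
  shows "0 \<notin> A"
  using assms monoid_gen.zero unfolding minimal_generators_def by blast

lemma fact_len_le_value:
  assumes "\<And>i. i \<le> t \<Longrightarrow> a i > 0" and "S_fact a t c n"
  shows "fact_len t c \<le> n"
proof -
  have "(\<Sum>i\<le>t. c i) \<le> (\<Sum>i\<le>t. c i * a i)"
    using assms(1) by (intro sum_mono) (simp add: Suc_le_eq)
  then show ?thesis using assms(2) by (simp add: fact_len_def S_fact_def)
qed

lemma fact_len_le_ord_S:
  assumes "\<And>i. i \<le> t \<Longrightarrow> a i > 0" and "S_fact a t c n"
  shows "fact_len t c \<le> ord_S a t n"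
proof -
  have "{fact_len t c | c. S_fact a t c n} \<subseteq> {..n}"
    using fact_len_le_value[OF assms(1)] by auto
  then have "finite {fact_len t c | c. S_fact a t c n}"
    by (rule finite_subset) simp
  then show ?thesis
    unfolding ord_S_def using assms(2) by (intro Max_ge) auto
qed

lemma BD_fact_drop_zero:
  assumes "S_fact a t x s" and "fact_len t x = r"
  shows "BD_fact a t (x(0 := 0)) (int s - int r * int (a 0))"
    and "fact_len t (x(0 := 0)) \<le> r"
proof -
  let ?x0 = "x(0 := 0)"
  have sum_x0: "int (\<Sum>i\<le>t. ?x0 i * a i) = int s - int (x 0) * int (a 0)"
    using assms(1) int_factorization_sum_update_zero[where x = x and a = a and t = t and v = 0]
    by (simp add: S_fact_def)
  have len_x0: "int (fact_len t ?x0) = int r - int (x 0)"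
    using assms(2) int_fact_len_update_zero[where x = x and t = t and v = 0] by simp
  show "BD_fact a t ?x0 (int s - int r * int (a 0))"
    unfolding BD_fact_def blowup_sum_eq sum_x0 len_x0 by (simp add: algebra_simps)
  show "fact_len t ?x0 \<le> r"
    using len_x0 by linarith
qed

lemma S_fact_lift_zero:
  assumes "BD_fact a t y (int s - int r * int (a 0))" and "fact_len t y \<le> r"
  defines "c \<equiv> y(0 := 2 * y 0 + r - fact_len t y)"
  shows "S_fact a t c s" and "fact_len t c = r + y 0"
proof -
  have c0: "int (c 0) = 2 * int (y 0) + int r - int (fact_len t y)"
    using assms(2) by (simp add: c_def)
  have "(\<Sum>i\<le>t. int (y i) * blowup_gen a i) = int s - int r * int (a 0)"
    using assms(1) by (simp add: BD_fact_def)
  then have value_y: "int (\<Sum>i\<le>t. y i * a i)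
      = int s - int r * int (a 0) + (int (fact_len t y) - int (y 0)) * int (a 0)"
    unfolding blowup_sum_eq by simp
  have "int (\<Sum>i\<le>t. c i * a i) = int (\<Sum>i\<le>t. y i * a i) + (int (c 0) - int (y 0)) * int (a 0)"
    using int_factorization_sum_update_zero[where x = y and a = a and t = t and v = "c 0"]
    by (simp add: c_def)
  also have "\<dots> = int s"
    unfolding value_y c0 by (simp add: algebra_simps)
  finally show "S_fact a t c s"
    unfolding S_fact_def by (simp only: of_nat_eq_iff)
  have "int (fact_len t c) = int (fact_len t y) - int (y 0) + int (c 0)"
    using int_fact_len_update_zero[where x = y and t = t and v = "c 0"] by (simp add: c_def)
  then show "fact_len t c = r + y 0"
    using c0 by linarith
qed

theorem lemma2p2:
  fixes S :: "nat set" and t :: nat and a :: "nat \<Rightarrow> nat" and s r :: nat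
  assumes "numerical_semigroup S"
    and "minimal_generators S (a ` {0..t})"
    and "strict_mono_on {0..t} a"
    and "s \<in> S"
  shows "(\<forall>x. S_fact a t x s \<and> fact_len t x = r \<longrightarrow>
            BD_fact a t (x(0 := 0)) (int s - int r * int (a 0)) \<and> fact_len t (x(0 := 0)) \<le> r)
    \<and> (\<forall>y. BD_fact a t y (int s - int r * int (a 0)) \<and> fact_len t y \<le> r \<longrightarrow>
            S_fact a t (y(0 := 2 * y 0 + r - fact_len t y)) s
            \<and> fact_len t (y(0 := 2 * y 0 + r - fact_len t y)) = r + y 0
            \<and> ord_S a t s \<ge> r)"
proof -
  have pos: "a i > 0" if "i \<le> t" for i
    using zero_notin_minimal_generators[OF assms(2)] that by (metis atLeastAtMost_iff gr0I image_eqI le0)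
  have "ord_S a t s \<ge> r"
    if "BD_fact a t y (int s - int r * int (a 0))" "fact_len t y \<le> r" for y
    using fact_len_le_ord_S[OF pos S_fact_lift_zero(1)[OF that]] S_fact_lift_zero(2)[OF that]
    by simp
  with BD_fact_drop_zero[of a t _ s r] S_fact_lift_zero[of a t _ s r] show ?thesis
    by blast
qed

end
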